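(* Let $\Upsilon$ be a tree and let $\|\cdot\|$ be an equivalent strictly convex norm on $C_0(\Upsilon)$, with associated function $\mu(t)=\inf\{\|\mathbf{1}_{(0,t]}+f'\|: f'\in C_0(\Upsilon),\ \operatorname{supp}f'\subseteq(t,\infty)\}$. Then for every $s\in\Upsilon$ there is at most one point $t$ which is bad for $\mu$ and satisfies $s\preceq t$ and $\mu(t)=\mu(s)$. In particular, $\mu$ is strictly increasing on the set of its bad points.
   Context: A tree is a partially ordered set $(\Upsilon,\preceq)$ such that for each $t$ the set $(0,t]=\{s:s\preceq t\}$ is well-ordered; write $(0,t)=\{s:s\prec t\}$, $(t,\infty)=\{u:t\prec u\}$, and let $r(t)$ be the order type of $(0,t)$. Trees are assumed Hausdorff: if $r(t)$ is a limit ordinal and $(0,t)=(0,t')$ then $t=t'$. $\Upsilon$ carries the coarsest topology in which every $(0,t]$ is open and closed, and $C_0(\Upsilon)$ is the space of continuous $f:\Upsilon\to\mathbb{R}$ with $\{|f|\ge\epsilon\}$ compact for every $\epsilon>0$, with the supremum norm; $\operatorname{supp}f=\{s:f(s)\ne0\}$. The set $t^+$ of immediate successors of $t$ consists of those $u$ with $(0,u)=(0,t]$. The function $\mu$ is increasing. For increasing $\rho$, $t$ is good for $\rho$ if there is a finite $F\subseteq t^+$ with $\inf_{u\in t^+\setminus F}\rho(u)>\rho(t)$ (infimum over the empty set $=+\infty$); otherwise bad. A norm is strictly convex if $\|x\|=\|y\|=\tfrac12\|x+y\|$ implies $x=y$. *)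

theory Defs
  imports "HOL-Analysis.Analysis" "HOL-Library.Extended_Real"
begin

text \<open>A tree is represented by a type 'a (the underlying set of the tree) together with
  its order relation le.  (0,t] = {s. le s t}.\<close>

definition tree_lt :: "('a \<Rightarrow> 'a \<Rightarrow> bool) \<Rightarrow> 'a \<Rightarrow> 'a \<Rightarrow> bool" where
  "tree_lt le s t \<longleftrightarrow> le s t \<and> s \<noteq> t"

definition is_tree :: "('a \<Rightarrow> 'a \<Rightarrow> bool) \<Rightarrow> bool" where
  "is_tree le \<longleftrightarrow>
     (\<forall>x. le x x) \<and> (\<forall>x y. le x y \<and> le y x \<longrightarrow> x = y) \<and>
     (\<forall>x y z. le x y \<and> le y z \<longrightarrow> le x z) \<and>
     \<comment> \<open>each (0,t] is well-ordered: every nonempty subset has a least element\<close>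
     (\<forall>t A. A \<subseteq> {s. le s t} \<and> A \<noteq> {} \<longrightarrow> (\<exists>m\<in>A. \<forall>a\<in>A. le m a))"

text \<open>r(t) is a limit ordinal iff (0,t) is nonempty and has no greatest element.\<close>
definition limit_height :: "('a \<Rightarrow> 'a \<Rightarrow> bool) \<Rightarrow> 'a \<Rightarrow> bool" where
  "limit_height le t \<longleftrightarrow> {s. tree_lt le s t} \<noteq> {} \<and>
     \<not> (\<exists>m. tree_lt le m t \<and> (\<forall>s. tree_lt le s t \<longrightarrow> le s m))"

definition hausdorff_tree :: "('a \<Rightarrow> 'a \<Rightarrow> bool) \<Rightarrow> bool" where
  "hausdorff_tree le \<longleftrightarrow> is_tree le \<and>
     (\<forall>t t'. limit_height le t \<and> {s. tree_lt le s t} = {s. tree_lt le s t'} \<longrightarrow> t = t')"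

definition tree_topology :: "('a \<Rightarrow> 'a \<Rightarrow> bool) \<Rightarrow> 'a topology" where
  "tree_topology le = topology_generated_by
     ((\<lambda>t. {s. le s t}) ` UNIV \<union> (\<lambda>t. - {s. le s t}) ` UNIV)"

definition C0 :: "('a \<Rightarrow> 'a \<Rightarrow> bool) \<Rightarrow> ('a \<Rightarrow> real) set" where
  "C0 le = {f. continuous_map (tree_topology le) euclideanreal f \<and>
              (\<forall>\<epsilon>>0. compactin (tree_topology le) {s. \<bar>f s\<bar> \<ge> \<epsilon>})}"

definition sup_norm :: "('a \<Rightarrow> real) \<Rightarrow> real" where
  "sup_norm f = (SUP s. \<bar>f s\<bar>)"

definition supp :: "('a \<Rightarrow> real) \<Rightarrow> 'a set" where
  "supp f = {s. f s \<noteq> 0}"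

definition equiv_norm_C0 :: "('a \<Rightarrow> 'a \<Rightarrow> bool) \<Rightarrow> (('a \<Rightarrow> real) \<Rightarrow> real) \<Rightarrow> bool" where
  "equiv_norm_C0 le N \<longleftrightarrow>
     (\<forall>f\<in>C0 le. \<forall>g\<in>C0 le. N (\<lambda>s. f s + g s) \<le> N f + N g) \<and>
     (\<forall>f\<in>C0 le. \<forall>c::real. N (\<lambda>s. c * f s) = \<bar>c\<bar> * N f) \<and>
     (\<exists>a b. 0 < a \<and> 0 < b \<and> (\<forall>f\<in>C0 le. a * sup_norm f \<le> N f \<and> N f \<le> b * sup_norm f))"

definition strictly_convex_C0 :: "('a \<Rightarrow> 'a \<Rightarrow> bool) \<Rightarrow> (('a \<Rightarrow> real) \<Rightarrow> real) \<Rightarrow> bool" where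
  "strictly_convex_C0 le N \<longleftrightarrow>
     (\<forall>x\<in>C0 le. \<forall>y\<in>C0 le. N x = N y \<and> N y = N (\<lambda>s. x s + y s) / 2 \<longrightarrow> x = y)"

definition mu_fun :: "('a \<Rightarrow> 'a \<Rightarrow> bool) \<Rightarrow> (('a \<Rightarrow> real) \<Rightarrow> real) \<Rightarrow> 'a \<Rightarrow> real" where
  "mu_fun le N t = Inf {N (\<lambda>u. indicator {s. le s t} u + f' u) | f'.
       f' \<in> C0 le \<and> supp f' \<subseteq> {u. tree_lt le t u}}"

definition succs :: "('a \<Rightarrow> 'a \<Rightarrow> bool) \<Rightarrow> 'a \<Rightarrow> 'a set" where
  "succs le t = {u. {s. tree_lt le s u} = {s. le s t}}"

text \<open>Infimum taken in the extended reals, so that the infimum of the empty set is +\<infinity>.\<close>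
definition good_for :: "('a \<Rightarrow> 'a \<Rightarrow> bool) \<Rightarrow> ('a \<Rightarrow> real) \<Rightarrow> 'a \<Rightarrow> bool" where
  "good_for le \<rho> t \<longleftrightarrow> (\<exists>F. finite F \<and> F \<subseteq> succs le t \<and>
       (INF u\<in>succs le t - F. ereal (\<rho> u)) > ereal (\<rho> t))"

definition bad_for :: "('a \<Rightarrow> 'a \<Rightarrow> bool) \<Rightarrow> ('a \<Rightarrow> real) \<Rightarrow> 'a \<Rightarrow> bool" where
  "bad_for le \<rho> t \<longleftrightarrow> \<not> good_for le \<rho> t"

end

theory Submission
  imports Defs
begin

(* For a bad point t, mu(t) is attained by the indicator x of (0,t] itself.  Otherwise
   N x = mu(t) + 2 delta with delta > 0, and badness yields infinitely many successors u
   of t with mu(u) < mu(t) + delta.  For k of them pick y_u = 1_(0,u] + f_u of norm below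
   mu(t) + delta; the differences y_u - x are supported on the pairwise disjoint cones
   [u, oo) and have uniformly bounded sup norm, so x differs from the average of the y_u
   by O(1/k) in sup norm, hence in N, and N x <= mu(t) + delta + O(1/k): a contradiction.
   Now if t, t' >= s are bad with mu(t) = mu(t') = mu(s), the midpoint of 1_(0,t] and
   1_(0,t'] is a competitor in the infimum defining mu(s), so its norm is at least
   mu(s) = N 1_(0,t] = N 1_(0,t'], and strict convexity forces t = t'.  As mu is
   increasing, this also makes mu strictly increasing on bad points. *)

locale tree_order =
  fixes le :: "'a \<Rightarrow> 'a \<Rightarrow> bool"
  assumes is_tree: "is_tree le"
begin

lemma tree_refl: "le x x"
  using is_tree unfolding is_tree_def by blast

lemma tree_antisym: "le x y \<Longrightarrow> le y x \<Longrightarrow> x = y"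
  using is_tree unfolding is_tree_def by blast

lemma tree_trans: "le x y \<Longrightarrow> le y z \<Longrightarrow> le x z"
  using is_tree unfolding is_tree_def by blast

lemma down_set_has_least: "A \<subseteq> {s. le s t} \<Longrightarrow> A \<noteq> {} \<Longrightarrow> \<exists>m\<in>A. \<forall>a\<in>A. le m a"
  using is_tree unfolding is_tree_def by blast

lemma tree_linear_below: "le x v \<Longrightarrow> le y v \<Longrightarrow> le x y \<or> le y x"
  using down_set_has_least[of "{x, y}" v] by auto

lemma wfP_tree_lt: "wfP (tree_lt le)"
proof (rule wfp_eq_minimal[THEN iffD2], intro allI impI)
  fix Q :: "'a set" and x assume "x \<in> Q"
  then obtain m where m: "m \<in> Q \<inter> {s. le s x}" "\<forall>a\<in>Q \<inter> {s. le s x}. le m a"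
    using down_set_has_least[of "Q \<inter> {s. le s x}" x] tree_refl by blast
  then have "tree_lt le y m \<Longrightarrow> y \<notin> Q" for y
    using tree_trans tree_antisym unfolding tree_lt_def by blast
  then show "\<exists>z\<in>Q. \<forall>y. tree_lt le y z \<longrightarrow> y \<notin> Q"
    using m by blast
qed

lemma initial_segment_eq_predecessors:
  assumes "A \<subseteq> {s. le s x}" and "x \<notin> A" and down_closed: "\<And>s s'. s' \<in> A \<Longrightarrow> le s s' \<Longrightarrow> s \<in> A"
  shows "\<exists>a. le a x \<and> a \<notin> A \<and> {s. tree_lt le s a} = A"
proof -
  obtain a where a: "le a x" "a \<notin> A" and least: "\<And>b. le b x \<Longrightarrow> b \<notin> A \<Longrightarrow> le a b"
    using down_set_has_least[of "{s. le s x} - A" x] assms(2) tree_refl by blast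
  have "tree_lt le s a \<longleftrightarrow> s \<in> A" for s
  proof
    assume "tree_lt le s a"
    then show "s \<in> A"
      using least[of s] a(1) tree_trans tree_antisym unfolding tree_lt_def by blast
  next
    assume "s \<in> A"
    then have "le s a \<or> le a s"
      using tree_linear_below a(1) assms(1) by blast
    then show "tree_lt le s a"
      using \<open>s \<in> A\<close> a(2) down_closed unfolding tree_lt_def by blast
  qed
  then show ?thesis
    using a by blast
qed

lemma succs_lt_iff: "u \<in> succs le t \<Longrightarrow> tree_lt le v u \<longleftrightarrow> le v t"
  unfolding succs_def by blast

lemma le_succs_iff: "u \<in> succs le t \<Longrightarrow> le v u \<longleftrightarrow> le v t \<or> v = u"
  using succs_lt_iff[of u t v] tree_refl unfolding tree_lt_def by blast

lemma succs_eq_if_common_upper_bound: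
  assumes "u \<in> succs le t" "u' \<in> succs le t" "le u v" "le u' v"
  shows "u = u'"
proof -
  have "w = w'" if "w \<in> succs le t" "w' \<in> succs le t" "le w w'" for w w'
    using that succs_lt_iff[of w t t] succs_lt_iff[of w' t w] tree_refl tree_antisym
    unfolding tree_lt_def by blast
  then show ?thesis
    using tree_linear_below[OF assms(3,4)] assms(1,2) by metis
qed

lemma succ_perturbation_neq_imp_le:
  assumes "u \<in> succs le t" "supp f \<subseteq> {v. tree_lt le u v}"
    and "indicator {s. le s u} v + f v \<noteq> (indicator {s. le s t} v :: real)"
  shows "le u v"
proof (rule ccontr)
  assume "\<not> le u v"
  then have "f v = 0" and "le v u \<longleftrightarrow> le v t"
    using assms(2) le_succs_iff[OF assms(1), of v] tree_refl
    unfolding supp_def tree_lt_def by auto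
  then show False
    using assms(3) by (simp add: indicator_def)
qed

lemma indicator_down_neq_imp_lt:
  assumes "le s t" and "indicator {w. le w t} v \<noteq> (indicator {w. le w s} v :: real)"
  shows "tree_lt le s v"
proof -
  have "\<not> le v s"
    using assms tree_trans by (auto simp: indicator_def)
  moreover have "le v t"
    using assms(2) \<open>\<not> le v s\<close> by (auto simp: indicator_def)
  ultimately have "le s v"
    using tree_linear_below[OF _ assms(1)] by blast
  moreover have "s \<noteq> v"
    using \<open>\<not> le v s\<close> tree_refl by blast
  ultimately show ?thesis
    unfolding tree_lt_def by blast
qed

end

lemma topspace_tree_topology [simp]: "topspace (tree_topology le) = UNIV"
  unfolding tree_topology_def topology_generated_by_topspace by auto

lemma openin_down_set: "openin (tree_topology le) {s. le s t}"
  unfolding tree_topology_def by (rule topology_generated_by_Basis) auto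

lemma openin_Compl_down_set: "openin (tree_topology le) (- {s. le s t})"
  unfolding tree_topology_def by (rule topology_generated_by_Basis) auto

lemma continuous_map_indicator_down_set:
  "continuous_map (tree_topology le) euclideanreal (indicator {s. le s t} :: 'a \<Rightarrow> real)"
  unfolding continuous_map topspace_tree_topology
proof (intro conjI allI impI)
  fix U :: "real set"
  have "{x \<in> UNIV. (indicator {s. le s t} x :: real) \<in> U} =
     (if 1 \<in> U then {s. le s t} else {}) \<union> (if 0 \<in> U then - {s. le s t} else {})"
    by (auto simp: indicator_def)
  then show "openin (tree_topology le) {x \<in> UNIV. (indicator {s. le s t} x :: real) \<in> U}"
    using openin_down_set openin_Compl_down_set openin_topspace[of "tree_topology le"]
    by (auto intro: openin_Un)
qed auto

lemma closedin_abs_ge: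
  "continuous_map (tree_topology le) euclideanreal f \<Longrightarrow> closedin (tree_topology le) {s. e \<le> \<bar>f s\<bar>}"
  using closedin_continuous_map_preimage[of "tree_topology le" euclideanreal f "{y. e \<le> \<bar>y\<bar>}"]
  by (simp add: closed_Collect_le continuous_intros)

lemma C0_zero: "(\<lambda>s. 0) \<in> C0 le"
  unfolding C0_def by simp

lemma C0_add:
  assumes "f \<in> C0 le" "g \<in> C0 le"
  shows "(\<lambda>s. f s + g s) \<in> C0 le"
  unfolding C0_def
proof (intro CollectI conjI allI impI)
  show cont: "continuous_map (tree_topology le) euclideanreal (\<lambda>s. f s + g s)"
    using assms unfolding C0_def by (simp add: continuous_map_add)
  fix e :: real assume "e > 0"
  have "compactin (tree_topology le) ({s. e/2 \<le> \<bar>f s\<bar>} \<union> {s. e/2 \<le> \<bar>g s\<bar>})"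
    using assms \<open>e > 0\<close> half_gt_zero unfolding C0_def by (blast intro: compactin_Un)
  moreover have "{s. e \<le> \<bar>f s + g s\<bar>} \<subseteq> {s. e/2 \<le> \<bar>f s\<bar>} \<union> {s. e/2 \<le> \<bar>g s\<bar>}"
    by auto
  ultimately show "compactin (tree_topology le) {s. e \<le> \<bar>f s + g s\<bar>}"
    using closedin_abs_ge[OF cont] closed_compactin by blast
qed

lemma C0_cmult:
  assumes "f \<in> C0 le"
  shows "(\<lambda>s. c * f s) \<in> C0 le"
proof (cases "c = 0")
  case True
  then show ?thesis
    using C0_zero by simp
next
  case False
  then have "{s. e \<le> \<bar>c * f s\<bar>} = {s. e / \<bar>c\<bar> \<le> \<bar>f s\<bar>}" for e
    by (auto simp: abs_mult field_simps)
  then show ?thesis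
    using assms False unfolding C0_def by (simp add: continuous_map_real_mult_left)
qed

lemma C0_diff: "f \<in> C0 le \<Longrightarrow> g \<in> C0 le \<Longrightarrow> (\<lambda>s. f s - g s) \<in> C0 le"
  using C0_add[OF _ C0_cmult[of g le "-1"], of f] by simp

lemma C0_sum:
  "finite U \<Longrightarrow> (\<And>u. u \<in> U \<Longrightarrow> y u \<in> C0 le) \<Longrightarrow> (\<lambda>v. \<Sum>u\<in>U. y u v) \<in> C0 le"
  by (induction U rule: finite_induct) (simp_all add: C0_zero C0_add)

lemma C0_bounded:
  assumes "f \<in> C0 le"
  shows "bdd_above (range (\<lambda>s. \<bar>f s\<bar>))"
proof -
  have "compactin (tree_topology le) {s. 1 \<le> \<bar>f s\<bar>}"
    and "continuous_map (tree_topology le) euclideanreal f"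
    using assms unfolding C0_def by auto
  then have "compact (f ` {s. 1 \<le> \<bar>f s\<bar>})"
    using image_compactin by fastforce
  then obtain B where "\<forall>x\<in>f ` {s. 1 \<le> \<bar>f s\<bar>}. norm x \<le> B"
    using compact_imp_bounded bounded_iff by metis
  then have "\<bar>f s\<bar> \<le> max 1 B" for s
    by (cases "1 \<le> \<bar>f s\<bar>") auto
  then show ?thesis
    by (rule bdd_aboveI2)
qed

lemma abs_le_sup_norm: "f \<in> C0 le \<Longrightarrow> \<bar>f s\<bar> \<le> sup_norm f"
  unfolding sup_norm_def by (rule cSUP_upper[OF UNIV_I C0_bounded])

locale hausdorff_tree_order =
  fixes le :: "'a \<Rightarrow> 'a \<Rightarrow> bool"
  assumes hausdorff_tree: "hausdorff_tree le"

sublocale hausdorff_tree_order \<subseteq> tree_order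
  using hausdorff_tree unfolding hausdorff_tree_def by unfold_locales blast

context hausdorff_tree_order
begin

(* The only use of the Hausdorff condition; it is what makes the sets (0,t] compact. *)
lemma common_lower_bounds_have_max:
  assumes "\<exists>s. le s t \<and> le s w"
  shows "\<exists>p. le p t \<and> le p w \<and> (\<forall>s. le s t \<and> le s w \<longrightarrow> le s p)"
proof (rule ccontr)
  define A where "A = {s. le s t \<and> le s w}"
  assume no_max: "\<not> ?thesis"
  then have "\<not> le t w" "\<not> le w t"
    using tree_refl by blast+
  have A_down_closed: "s' \<in> A \<Longrightarrow> le s s' \<Longrightarrow> s \<in> A" for s s'
    unfolding A_def using tree_trans by blast
  obtain a where a: "le a t" "a \<notin> A" "{s. tree_lt le s a} = A"
    using initial_segment_eq_predecessors[of A t] A_down_closed \<open>\<not> le t w\<close>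
    unfolding A_def by blast
  obtain a' where a': "le a' w" "a' \<notin> A" "{s. tree_lt le s a'} = A"
    using initial_segment_eq_predecessors[of A w] A_down_closed \<open>\<not> le w t\<close>
    unfolding A_def by blast
  have pred_a: "tree_lt le s a \<longleftrightarrow> le s t \<and> le s w" for s
    using a(3) unfolding A_def by blast
  have "{s. tree_lt le s a} \<noteq> {}"
    using assms pred_a by blast
  moreover have "\<not> (\<exists>m. tree_lt le m a \<and> (\<forall>s. tree_lt le s a \<longrightarrow> le s m))"
    using no_max unfolding pred_a by blast
  ultimately have "limit_height le a"
    unfolding limit_height_def by blast
  then have "a = a'"
    using hausdorff_tree a(3) a'(3) unfolding hausdorff_tree_def by blast
  then show False
    using a a' unfolding A_def by blast
qed

lemma openin_contains_final_segment:
  assumes "openin (tree_topology le) B" and "t \<in> B"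
  shows "{s. le s t} \<subseteq> B \<or> (\<exists>p. tree_lt le p t \<and> {s. le s t \<and> \<not> le s p} \<subseteq> B)"
proof -
  have "generate_topology_on ((\<lambda>t. {s. le s t}) ` UNIV \<union> (\<lambda>t. - {s. le s t}) ` UNIV) B"
    using assms(1) unfolding tree_topology_def by (simp add: openin_topology_generated_by_iff)
  then show ?thesis
    using assms(2)
  proof (induction arbitrary: t)
    case Empty
    then show ?case by simp
  next
    case (Int B1 B2)
    have "{s. le s t} \<subseteq> B1 \<or> (\<exists>p. tree_lt le p t \<and> {s. le s t \<and> \<not> le s p} \<subseteq> B1)"
      and "{s. le s t} \<subseteq> B2 \<or> (\<exists>p. tree_lt le p t \<and> {s. le s t \<and> \<not> le s p} \<subseteq> B2)"
      using Int by blast+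
    then show ?case
    proof (elim disjE exE conjE)
      fix p q assume p: "tree_lt le p t" "{s. le s t \<and> \<not> le s p} \<subseteq> B1"
        and q: "tree_lt le q t" "{s. le s t \<and> \<not> le s q} \<subseteq> B2"
      have "le p q \<or> le q p"
        using tree_linear_below p(1) q(1) unfolding tree_lt_def by blast
      then show ?thesis
        using p q tree_trans by blast
    qed blast+
  next
    case (UN K)
    then show ?case by blast
  next
    case (Basis B)
    then consider w where "B = {s. le s w}" | w where "B = - {s. le s w}"
      by blast
    then show ?case
    proof cases
      case 1
      then show ?thesis
        using Basis.prems tree_trans by auto
    next
      case 2
      show ?thesis
      proof (cases "\<exists>s. le s t \<and> le s w")
        case True
        then obtain p where p: "le p t" "le p w" "\<forall>s. le s t \<and> le s w \<longrightarrow> le s p"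
          using common_lower_bounds_have_max by blast
        then have "tree_lt le p t"
          using 2 Basis.prems unfolding tree_lt_def by auto
        moreover have "{s. le s t \<and> \<not> le s p} \<subseteq> B"
          using 2 p by auto
        ultimately show ?thesis by blast
      qed (use 2 in auto)
    qed
  qed
qed

lemma compactin_down_set: "compactin (tree_topology le) {s. le s t}"
proof (induction t rule: wfp_induct_rule[OF wfP_tree_lt])
  case (1 t)
  show ?case
    unfolding compactin_def topspace_tree_topology
  proof (intro conjI allI impI; (elim conjE)?)
    fix U assume U: "\<forall>B\<in>U. openin (tree_topology le) B" "{s. le s t} \<subseteq> \<Union>U"
    obtain B where B: "B \<in> U" "t \<in> B"
      using U(2) tree_refl by blast
    have "openin (tree_topology le) B"
      using U(1) B(1) by blast
    from openin_contains_final_segment[OF this B(2)]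
    show "\<exists>F. finite F \<and> F \<subseteq> U \<and> {s. le s t} \<subseteq> \<Union>F"
    proof (elim disjE exE conjE)
      assume "{s. le s t} \<subseteq> B"
      then show ?thesis
        using B by (intro exI[of _ "{B}"]) auto
    next
      fix p assume p: "tree_lt le p t" "{s. le s t \<and> \<not> le s p} \<subseteq> B"
      have "{s. le s p} \<subseteq> \<Union>U"
        using U(2) p(1) tree_trans unfolding tree_lt_def by blast
      then obtain F where "finite F" "F \<subseteq> U" "{s. le s p} \<subseteq> \<Union>F"
        using 1[OF p(1)] U(1) unfolding compactin_def by blast
      then show ?thesis
        using B p by (intro exI[of _ "insert B F"]) auto
    qed
  qed simp
qed

lemma indicator_down_set_in_C0: "(indicator {s. le s t} :: 'a \<Rightarrow> real) \<in> C0 le"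
proof -
  have "{s. e \<le> \<bar>(indicator {s. le s t} s :: real)\<bar>} = (if e \<le> 1 then {s. le s t} else {})"
    if "e > 0" for e
    using that by (auto simp: indicator_def)
  then show ?thesis
    unfolding C0_def using compactin_down_set continuous_map_indicator_down_set by simp
qed

end

lemma abs_sum_le_if_at_most_one_nonzero:
  fixes g :: "'i \<Rightarrow> real"
  assumes "finite U" "0 \<le> C" "\<And>u. u \<in> U \<Longrightarrow> \<bar>g u\<bar> \<le> C"
    and "\<And>u u'. u \<in> U \<Longrightarrow> u' \<in> U \<Longrightarrow> g u \<noteq> 0 \<Longrightarrow> g u' \<noteq> 0 \<Longrightarrow> u = u'"
  shows "\<bar>\<Sum>u\<in>U. g u\<bar> \<le> C"
proof (cases "\<exists>u\<in>U. g u \<noteq> 0")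
  case True
  then obtain u0 where "u0 \<in> U" "g u0 \<noteq> 0"
    by blast
  then have "\<forall>u\<in>U - {u0}. g u = 0"
    using assms(4) by blast
  then have "(\<Sum>u\<in>U. g u) = g u0"
    using sum.mono_neutral_right[OF assms(1), of "{u0}"] \<open>u0 \<in> U\<close> by simp
  then show ?thesis
    using assms(3) \<open>u0 \<in> U\<close> by simp
qed (use assms(2) in simp)

lemma bad_for_infinite_succs_below:
  assumes "bad_for le \<rho> t" and "\<rho> t < c"
  shows "infinite {u \<in> succs le t. \<rho> u < c}"
proof
  let ?S = "{u \<in> succs le t. \<rho> u < c}"
  assume "finite ?S"
  have "ereal (\<rho> t) < ereal c"
    using assms(2) by simp
  also have "ereal c \<le> (INF u\<in>succs le t - ?S. ereal (\<rho> u))"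
    by (rule INF_greatest) auto
  finally have "good_for le \<rho> t"
    unfolding good_for_def using \<open>finite ?S\<close> by blast
  then show False
    using assms(1) unfolding bad_for_def by blast
qed

locale C0_norm =
  fixes le :: "'a \<Rightarrow> 'a \<Rightarrow> bool" and N :: "('a \<Rightarrow> real) \<Rightarrow> real"
  assumes equiv_norm: "equiv_norm_C0 le N"
begin

lemma norm_triangle: "f \<in> C0 le \<Longrightarrow> g \<in> C0 le \<Longrightarrow> N (\<lambda>s. f s + g s) \<le> N f + N g"
  using equiv_norm unfolding equiv_norm_C0_def by blast

lemma norm_cmult: "f \<in> C0 le \<Longrightarrow> N (\<lambda>s. c * f s) = \<bar>c\<bar> * N f"
  using equiv_norm unfolding equiv_norm_C0_def by blast

lemma norm_equiv_sup_norm: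
  obtains a b where "0 < a" "\<And>f. f \<in> C0 le \<Longrightarrow> a * sup_norm f \<le> N f"
    and "0 < b" "\<And>f. f \<in> C0 le \<Longrightarrow> N f \<le> b * sup_norm f"
  using equiv_norm unfolding equiv_norm_C0_def by blast

lemma norm_nonneg: "f \<in> C0 le \<Longrightarrow> 0 \<le> N f"
  using norm_cmult[of f "-1"] norm_triangle[of f "\<lambda>s. - f s"] C0_cmult[of f le "-1"]
    norm_cmult[OF C0_zero, of 0] by simp

lemma norm_sum:
  "finite U \<Longrightarrow> (\<And>u. u \<in> U \<Longrightarrow> y u \<in> C0 le) \<Longrightarrow> N (\<lambda>v. \<Sum>u\<in>U. y u v) \<le> (\<Sum>u\<in>U. N (y u))"
proof (induction U rule: finite_induct)
  case empty
  then show ?case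
    using norm_cmult[OF C0_zero, of 0] by simp
next
  case (insert u U)
  then have "N (\<lambda>v. \<Sum>u'\<in>insert u U. y u' v) \<le> N (y u) + N (\<lambda>v. \<Sum>u'\<in>U. y u' v)"
    using norm_triangle[of "y u" "\<lambda>v. \<Sum>u'\<in>U. y u' v"] C0_sum[of U y] by simp
  then show ?case
    using insert by simp
qed

lemma norm_le_average_of_disjoint_perturbations:
  assumes a: "0 < a" "\<And>f. f \<in> C0 le \<Longrightarrow> a * sup_norm f \<le> N f"
    and b: "0 < b" "\<And>f. f \<in> C0 le \<Longrightarrow> N f \<le> b * sup_norm f"
    and x: "x \<in> C0 le" and U: "finite U" "U \<noteq> {}"
    and y: "\<And>u. u \<in> U \<Longrightarrow> y u \<in> C0 le" "\<And>u. u \<in> U \<Longrightarrow> N (y u) \<le> M"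
    and disjoint: "\<And>u u' v. u \<in> U \<Longrightarrow> u' \<in> U \<Longrightarrow> y u v \<noteq> x v \<Longrightarrow> y u' v \<noteq> x v \<Longrightarrow> u = u'"
  shows "N x \<le> M + b * (M + N x) / (a * card U)"
proof -
  define k where "k = real (card U)"
  define C where "C = (M + N x) / a"
  define z where "z v = (\<Sum>u\<in>U. y u v) / k" for v
  have k: "k > 0"
    using U unfolding k_def by (simp add: card_gt_0_iff)
  have g_C0: "(\<lambda>v. y u v - x v) \<in> C0 le" if "u \<in> U" for u
    using C0_diff[OF y(1)[OF that] x] .
  have g_bound: "\<bar>y u v - x v\<bar> \<le> C" if "u \<in> U" for u v
  proof -
    have "N (\<lambda>v. y u v + (-1) * x v) \<le> N (y u) + N (\<lambda>v. (-1) * x v)"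
      by (rule norm_triangle[OF y(1)[OF that] C0_cmult[OF x]])
    then have "a * sup_norm (\<lambda>v. y u v - x v) \<le> N (y u) + N x"
      using a(2)[OF g_C0[OF that]] norm_cmult[OF x, of "-1"] by simp
    also have "\<dots> \<le> M + N x"
      using y(2)[OF that] by simp
    finally have "a * \<bar>y u v - x v\<bar> \<le> M + N x"
      using abs_le_sup_norm[OF g_C0[OF that], of v] a(1)
      by (meson mult_left_mono less_imp_le order_trans)
    then show ?thesis
      unfolding C_def using a(1) by (simp add: pos_le_divide_eq mult.commute)
  qed
  have "0 \<le> C"
    using g_bound U(2) by (meson abs_ge_zero equals0I order_trans)
  have "\<bar>\<Sum>u\<in>U. y u v - x v\<bar> \<le> C" for v
    by (rule abs_sum_le_if_at_most_one_nonzero[OF U(1) \<open>0 \<le> C\<close>]) (use g_bound disjoint in auto)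
  moreover have "x v - z v = - (\<Sum>u\<in>U. y u v - x v) / k" for v
    using k unfolding z_def k_def by (simp add: sum_subtractf field_simps)
  ultimately have "\<bar>x v - z v\<bar> \<le> C / k" for v
    using k by (simp add: divide_right_mono)
  then have "sup_norm (\<lambda>v. x v - z v) \<le> C / k"
    unfolding sup_norm_def by (rule cSUP_least[OF UNIV_not_empty])
  moreover have z_C0: "z \<in> C0 le"
    using C0_cmult[OF C0_sum[OF U(1) y(1)], where c = "1 / k"] unfolding z_def by simp
  ultimately have "N (\<lambda>v. x v - z v) \<le> b * (C / k)"
    using b C0_diff[OF x z_C0] by (meson mult_left_mono less_imp_le order_trans)
  moreover have "N z \<le> M"
  proof -
    have "N z = N (\<lambda>v. \<Sum>u\<in>U. y u v) / k"
      using norm_cmult[OF C0_sum[OF U(1) y(1)], where c = "1 / k"] k unfolding z_def by simp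
    also have "\<dots> \<le> (\<Sum>u\<in>U. N (y u)) / k"
      using norm_sum[OF U(1) y(1)] k by (simp add: divide_right_mono)
    also have "\<dots> \<le> (\<Sum>u\<in>U. M) / k"
      using sum_mono[of U "\<lambda>u. N (y u)" "\<lambda>_. M"] y(2) k by (simp add: divide_right_mono)
    also have "\<dots> = M"
      using k unfolding k_def by simp
    finally show ?thesis .
  qed
  moreover have "N x \<le> N z + N (\<lambda>v. x v - z v)"
    using norm_triangle[OF z_C0 C0_diff[OF x z_C0]] by simp
  ultimately show ?thesis
    unfolding C_def k_def by (simp add: field_simps)
qed

end

locale tree_C0_norm = hausdorff_tree_order le + C0_norm le N
  for le :: "'a \<Rightarrow> 'a \<Rightarrow> bool" and N :: "('a \<Rightarrow> real) \<Rightarrow> real"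
begin

lemma mu_fun_le:
  assumes "f \<in> C0 le" "supp f \<subseteq> {u. tree_lt le t u}"
  shows "mu_fun le N t \<le> N (\<lambda>u. indicator {s. le s t} u + f u)"
  unfolding mu_fun_def
proof (rule cInf_lower)
  show "bdd_below {N (\<lambda>u. indicator {s. le s t} u + f' u) | f'. f' \<in> C0 le \<and> supp f' \<subseteq> {u. tree_lt le t u}}"
    by (rule bdd_belowI[of _ 0]) (auto intro!: norm_nonneg C0_add indicator_down_set_in_C0)
qed (use assms in blast)

lemma mu_fun_le_indicator: "mu_fun le N t \<le> N (indicator {s. le s t})"
  using mu_fun_le[OF C0_zero, of t] by (simp add: supp_def)

lemma mu_fun_lessE:
  assumes "mu_fun le N t < c"
  obtains f where "f \<in> C0 le" "supp f \<subseteq> {u. tree_lt le t u}"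
    and "N (\<lambda>u. indicator {s. le s t} u + f u) < c"
proof -
  have "{N (\<lambda>u. indicator {s. le s t} u + f u) | f. f \<in> C0 le \<and> supp f \<subseteq> {u. tree_lt le t u}} \<noteq> {}"
    using C0_zero by (auto simp: supp_def)
  from cInf_lessD[OF this assms[unfolded mu_fun_def]] show ?thesis
    using that by blast
qed

lemma mu_fun_mono:
  assumes "le s t"
  shows "mu_fun le N s \<le> mu_fun le N t"
proof (rule ccontr)
  assume "\<not> ?thesis"
  then have "mu_fun le N t < mu_fun le N s"
    by simp
  then obtain f where f: "f \<in> C0 le" "supp f \<subseteq> {u. tree_lt le t u}"
    and less: "N (\<lambda>u. indicator {w. le w t} u + f u) < mu_fun le N s"
    by (rule mu_fun_lessE)
  define f' where "f' u = indicator {w. le w t} u - indicator {w. le w s} u + f u" for u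
  have "f' \<in> C0 le"
    unfolding f'_def using C0_add[OF C0_diff f(1)] indicator_down_set_in_C0 by blast
  moreover have "supp f' \<subseteq> {u. tree_lt le s u}"
  proof
    fix v assume "v \<in> supp f'"
    then have "indicator {w. le w t} v \<noteq> (indicator {w. le w s} v :: real) \<or> f v \<noteq> 0"
      unfolding f'_def supp_def by auto
    then show "v \<in> {u. tree_lt le s u}"
      using indicator_down_neq_imp_lt[OF assms] f(2) assms tree_trans tree_antisym
      unfolding supp_def tree_lt_def by blast
  qed
  ultimately have "mu_fun le N s \<le> N (\<lambda>u. indicator {w. le w s} u + f' u)"
    by (rule mu_fun_le)
  then show False
    using less unfolding f'_def by simp
qed

lemma norm_indicator_le_average_over_succs:
  assumes a: "0 < a" "\<And>f. f \<in> C0 le \<Longrightarrow> a * sup_norm f \<le> N f"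
    and b: "0 < b" "\<And>f. f \<in> C0 le \<Longrightarrow> N f \<le> b * sup_norm f"
    and U: "finite U" "U \<noteq> {}" "U \<subseteq> {u \<in> succs le t. mu_fun le N u < M}"
  defines "x \<equiv> indicator {s. le s t} :: 'a \<Rightarrow> real"
  shows "N x \<le> M + b * (M + N x) / (a * card U)"
proof -
  have "\<forall>u\<in>U. \<exists>f. f \<in> C0 le \<and> supp f \<subseteq> {v. tree_lt le u v} \<and>
      N (\<lambda>v. indicator {s. le s u} v + f v) < M"
  proof
    fix u assume "u \<in> U"
    then have "mu_fun le N u < M"
      using U(3) by blast
    then obtain f where "f \<in> C0 le" "supp f \<subseteq> {v. tree_lt le u v}"
      "N (\<lambda>v. indicator {s. le s u} v + f v) < M"
      by (rule mu_fun_lessE)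
    then show "\<exists>f. f \<in> C0 le \<and> supp f \<subseteq> {v. tree_lt le u v} \<and>
        N (\<lambda>v. indicator {s. le s u} v + f v) < M"
      by blast
  qed
  from bchoice[OF this] obtain f where f: "\<forall>u\<in>U. f u \<in> C0 le \<and> supp (f u) \<subseteq> {v. tree_lt le u v} \<and>
      N (\<lambda>v. indicator {s. le s u} v + f u v) < M"
    by blast
  define y where "y u v = indicator {s. le s u} v + f u v" for u v
  show ?thesis
  proof (rule norm_le_average_of_disjoint_perturbations[OF a b _ U(1,2)])
    show "x \<in> C0 le"
      unfolding x_def by (rule indicator_down_set_in_C0)
    show "y u \<in> C0 le" if "u \<in> U" for u
      unfolding y_def using that f by (intro C0_add indicator_down_set_in_C0) blast
    show "N (y u) \<le> M" if "u \<in> U" for u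
      unfolding y_def using that f by (blast intro: less_imp_le)
    have "le u v" if "u \<in> U" "y u v \<noteq> x v" for u v
      using that succ_perturbation_neq_imp_le[of u t "f u" v] f U(3) unfolding x_def y_def by blast
    then show "u = u'" if "u \<in> U" "u' \<in> U" "y u v \<noteq> x v" "y u' v \<noteq> x v" for u u' v
      using that succs_eq_if_common_upper_bound U(3) by blast
  qed
qed

lemma bad_for_mu_fun_eq:
  assumes bad: "bad_for le (mu_fun le N) t"
  shows "mu_fun le N t = N (indicator {s. le s t})"
proof (rule antisym[OF mu_fun_le_indicator], rule ccontr)
  define x :: "'a \<Rightarrow> real" where "x = indicator {s. le s t}"
  define \<delta> where "\<delta> = (N x - mu_fun le N t) / 2"
  define M where "M = mu_fun le N t + \<delta>"
  assume "\<not> N (indicator {s. le s t}) \<le> mu_fun le N t"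
  then have \<delta>: "\<delta> > 0"
    unfolding \<delta>_def x_def by simp
  obtain a b where a: "0 < a" "\<And>f. f \<in> C0 le \<Longrightarrow> a * sup_norm f \<le> N f"
    and b: "0 < b" "\<And>f. f \<in> C0 le \<Longrightarrow> N f \<le> b * sup_norm f"
    using norm_equiv_sup_norm by blast
  define q where "q = b * (M + N x) / a"
  obtain n :: nat where "q / \<delta> < n"
    using reals_Archimedean2 by blast
  then have q: "q / real (Suc n) < \<delta>"
    using \<delta> by (simp add: field_simps)
  have "infinite {u \<in> succs le t. mu_fun le N u < M}"
    using bad_for_infinite_succs_below[OF bad] \<delta> unfolding M_def by simp
  then obtain U where U: "finite U" "card U = Suc n" "U \<subseteq> {u \<in> succs le t. mu_fun le N u < M}"
    using infinite_arbitrarily_large by blast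
  then have "N x \<le> M + b * (M + N x) / (a * card U)"
    unfolding x_def by (intro norm_indicator_le_average_over_succs[OF a b]) auto
  also have "\<dots> < M + \<delta>"
    using q U(2) a(1) unfolding q_def by (simp add: field_simps)
  finally show False
    unfolding M_def \<delta>_def by simp
qed

lemma bad_for_mu_fun_unique_above:
  assumes convex: "strictly_convex_C0 le N"
    and "bad_for le (mu_fun le N) t" "le s t" "mu_fun le N t = mu_fun le N s"
    and "bad_for le (mu_fun le N) t'" "le s t'" "mu_fun le N t' = mu_fun le N s"
  shows "t = t'"
proof -
  define x :: "'a \<Rightarrow> real" where "x = indicator {v. le v t}"
  define y :: "'a \<Rightarrow> real" where "y = indicator {v. le v t'}"
  define f where "f v = (1/2) * (x v + y v) - indicator {w. le w s} v" for v
  have C0: "x \<in> C0 le" "y \<in> C0 le"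
    unfolding x_def y_def by (rule indicator_down_set_in_C0)+
  have norms: "N x = mu_fun le N s" "N y = mu_fun le N s"
    using assms bad_for_mu_fun_eq unfolding x_def y_def by auto
  have "f \<in> C0 le"
    unfolding f_def by (intro C0_diff C0_cmult C0_add C0 indicator_down_set_in_C0)
  moreover have "supp f \<subseteq> {u. tree_lt le s u}"
  proof
    fix v assume "v \<in> supp f"
    then have "x v \<noteq> indicator {w. le w s} v \<or> y v \<noteq> indicator {w. le w s} v"
      unfolding f_def supp_def by auto
    then show "v \<in> {u. tree_lt le s u}"
      using indicator_down_neq_imp_lt assms(3,6) unfolding x_def y_def by blast
  qed
  ultimately have "mu_fun le N s \<le> N (\<lambda>v. (1/2) * (x v + y v))"
    using mu_fun_le unfolding f_def by fastforce
  also have "\<dots> = N (\<lambda>v. x v + y v) / 2"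
    using norm_cmult[OF C0_add[OF C0], of "1/2"] by simp
  finally have "N x = N y \<and> N y = N (\<lambda>v. x v + y v) / 2"
    using norm_triangle[OF C0] norms by linarith
  then have "x = y"
    using convex C0 unfolding strictly_convex_C0_def by blast
  then have "x t' = y t'" "y t = x t"
    by simp_all
  then have "le t' t" "le t t'"
    using tree_refl unfolding x_def y_def by (auto simp: indicator_def split: if_splits)
  then show ?thesis
    by (rule tree_antisym[rotated])
qed

lemma bad_for_mu_fun_strict_mono:
  assumes "strictly_convex_C0 le N"
    and "bad_for le (mu_fun le N) s" "bad_for le (mu_fun le N) t" "tree_lt le s t"
  shows "mu_fun le N s < mu_fun le N t"
proof -
  have "mu_fun le N s \<noteq> mu_fun le N t"
    using bad_for_mu_fun_unique_above[OF assms(1,2) tree_refl refl assms(3)] assms(4)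
    unfolding tree_lt_def by auto
  then show ?thesis
    using mu_fun_mono assms(4) unfolding tree_lt_def by (simp add: order_less_le)
qed

end

theorem proposition3p3:
  fixes le :: "'a \<Rightarrow> 'a \<Rightarrow> bool" and N :: "('a \<Rightarrow> real) \<Rightarrow> real"
  assumes "hausdorff_tree le"
    and "equiv_norm_C0 le N"
    and "strictly_convex_C0 le N"
  shows "(\<forall>s t t'. bad_for le (mu_fun le N) t \<and> le s t \<and> mu_fun le N t = mu_fun le N s \<and>
                   bad_for le (mu_fun le N) t' \<and> le s t' \<and> mu_fun le N t' = mu_fun le N s
                   \<longrightarrow> t = t') \<and>
         (\<forall>s t. bad_for le (mu_fun le N) s \<and> bad_for le (mu_fun le N) t \<and> tree_lt le s t
                   \<longrightarrow> mu_fun le N s < mu_fun le N t)"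
proof -
  interpret tree_C0_norm le N
    using assms(1,2) by (intro tree_C0_norm.intro hausdorff_tree_order.intro C0_norm.intro)
  show ?thesis
    using bad_for_mu_fun_unique_above[OF assms(3)] bad_for_mu_fun_strict_mono[OF assms(3)]
    by blast
qed

end
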